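(* Let $n,m$ be positive integers and $\mathbf{r}=(r_1,\dots,r_m)$, $\mathbf{s}=(s_1,\dots,s_m)$ sequences of nonnegative integers with sums $r$ and $s$. Then $|\mathrm{SB}^-(n,\mathbf{r},\mathbf{s})| = |\mathrm{SP}(n,r,s,m)|$.
   Context: Selberg permutations: let $A(n,r,s,m)$ be the set of distinct letters $x_i$ ($1\le i\le n$), $a_{ij}^{(k)}$ ($1\le i<j\le n$, $1\le k\le m$), $b_i^{(k)}$ ($1\le i\le n$, $1\le k\le r$), $c_i^{(k)}$ ($1\le i\le n$, $1\le k\le s$). $\mathrm{SP}(n,r,s,m)$ is the set of permutations (linear orderings) of $A(n,r,s,m)$ in which $x_1,\dots,x_n$ appear in this order, each $a_{ij}^{(k)}$ lies between $x_i$ and $x_j$, each $b_i^{(k)}$ lies before $x_i$, and each $c_i^{(k)}$ lies after $x_i$. Books: for nonnegative integers $p,q$, the $(n,p,q)^-$-staircase is the set of cells $(i,j)$ (row $i$, column $j$) with $1\le i\le p+n$, $1\le j\le n+q$, $i\le j+p$, excluding those with $i\le p$ and $j>n$; the cell $(j+p,j)$ ($1\le j\le n$) is its $j$th diagonal cell (so row $i>p$ contains the diagonal cell $(i,i-p)$, column $j\le n$ contains $(j+p,j)$, and other rows/columns contain none). Let page $i$ be the $(n,r_i,s_i)^-$-staircase, $1\le i\le m$, and identify the $j$th diagonal cells of all pages for each $j$. An $(n,\mathbf{r},\mathbf{s})^-$-Selberg book is a filling of the resulting cells with $1,\dots,(r+s+1)n+m\binom n2$, each used once, such that in each page every non-diagonal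 cell has entry larger than that of the diagonal cell in its row (if any) and smaller than that of the diagonal cell in its column (if any). $\mathrm{SB}^-(n,\mathbf{r},\mathbf{s})$ is the set of these. *)

theory Defs
  imports Main "HOL-Library.FuncSet"
begin

text \<open>Letters of the alphabet A(n,r,s,m):
  X i = x_i,  A i j k = a_{ij}^{(k)},  B i k = b_i^{(k)},  C i k = c_i^{(k)}.\<close>
datatype letter = X nat | A nat nat nat | B nat nat | C nat nat

definition alphabet :: "nat \<Rightarrow> nat \<Rightarrow> nat \<Rightarrow> nat \<Rightarrow> letter set" where
  "alphabet n r s m =
     {X i | i. 1 \<le> i \<and> i \<le> n}
   \<union> {A i j k | i j k. 1 \<le> i \<and> i < j \<and> j \<le> n \<and> 1 \<le> k \<and> k \<le> m}
   \<union> {B i k | i k. 1 \<le> i \<and> i \<le> n \<and> 1 \<le> k \<and> k \<le> r}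
   \<union> {C i k | i k. 1 \<le> i \<and> i \<le> n \<and> 1 \<le> k \<and> k \<le> s}"

definition precedes :: "'a list \<Rightarrow> 'a \<Rightarrow> 'a \<Rightarrow> bool" where
  "precedes w a b \<longleftrightarrow> (\<exists>p q. p < q \<and> q < length w \<and> w ! p = a \<and> w ! q = b)"

definition SP :: "nat \<Rightarrow> nat \<Rightarrow> nat \<Rightarrow> nat \<Rightarrow> letter list set" where
  "SP n r s m = {w. distinct w \<and> set w = alphabet n r s m \<and>
     (\<forall>i j. 1 \<le> i \<and> i < j \<and> j \<le> n \<longrightarrow> precedes w (X i) (X j)) \<and>
     (\<forall>i j k. 1 \<le> i \<and> i < j \<and> j \<le> n \<and> 1 \<le> k \<and> k \<le> m \<longrightarrow>
        precedes w (X i) (A i j k) \<and> precedes w (A i j k) (X j)) \<and>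
     (\<forall>i k. 1 \<le> i \<and> i \<le> n \<and> 1 \<le> k \<and> k \<le> r \<longrightarrow> precedes w (B i k) (X i)) \<and>
     (\<forall>i k. 1 \<le> i \<and> i \<le> n \<and> 1 \<le> k \<and> k \<le> s \<longrightarrow> precedes w (X i) (C i k))}"

text \<open>The (n,p,q)^- staircase: cells (row i, column j).\<close>
definition staircase :: "nat \<Rightarrow> nat \<Rightarrow> nat \<Rightarrow> (nat \<times> nat) set" where
  "staircase n p q = {(i, j). 1 \<le> i \<and> i \<le> p + n \<and> 1 \<le> j \<and> j \<le> n + q \<and> i \<le> j + p
                             \<and> \<not> (i \<le> p \<and> n < j)}"

definition is_diag :: "nat \<Rightarrow> nat \<Rightarrow> nat \<Rightarrow> nat \<Rightarrow> bool" where
  "is_diag n p i j \<longleftrightarrow> 1 \<le> j \<and> j \<le> n \<and> i = j + p"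

text \<open>Cells of the book: Diag j is the (shared) j-th diagonal cell; Cell k i j is the
  non-diagonal cell (i,j) of page k.  Pages are indexed k = 0..m-1 here, page k
  being the (n, rs!k, ss!k)^- staircase (i.e. page k+1 of the paper).\<close>
datatype cell = Diag nat | Cell nat nat nat

definition book_cells :: "nat \<Rightarrow> nat list \<Rightarrow> nat list \<Rightarrow> cell set" where
  "book_cells n rs ss =
     {Diag j | j. 1 \<le> j \<and> j \<le> n}
   \<union> {Cell k i j | k i j. k < length rs \<and> (i, j) \<in> staircase n (rs ! k) (ss ! k)
                         \<and> \<not> is_diag n (rs ! k) i j}"

definition SB_minus :: "nat \<Rightarrow> nat list \<Rightarrow> nat list \<Rightarrow> (cell \<Rightarrow> nat) set" where
  "SB_minus n rs ss =
     {f. f \<in> extensional (book_cells n rs ss) \<and>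
         bij_betw f (book_cells n rs ss)
           {1 .. (sum_list rs + sum_list ss + 1) * n + length rs * (n choose 2)} \<and>
         (\<forall>k i j. k < length rs \<and> (i, j) \<in> staircase n (rs ! k) (ss ! k)
                  \<and> \<not> is_diag n (rs ! k) i j \<longrightarrow>
            (rs ! k < i \<longrightarrow> f (Diag (i - rs ! k)) < f (Cell k i j)) \<and>
            (j \<le> n \<longrightarrow> f (Cell k i j) < f (Diag j)))}"

end

theory Submission
  imports Defs
begin

text \<open>A Selberg book is a bijective labelling of the cells by 1..N that increases along the
  relation "diagonal cell of my row < me < diagonal cell of my column".  Bijective increasing
  labellings of a finite poset correspond to its linear extensions (list the elements in the
  order of their labels; conversely label each element by its position).  Sending the j-th
  diagonal cell to x_j and every other cell to a letter a, b or c turns the book poset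
  isomorphically into the poset of constraints defining Selberg permutations, whose linear
  extensions are exactly those permutations: the order x_i < x_j is implied by
  x_i < a_ij^(1) < x_j, which is available since m > 0.\<close>

section \<open>Labellings and linear extensions\<close>

definition labelings :: "'a set \<Rightarrow> ('a \<times> 'a) set \<Rightarrow> nat \<Rightarrow> ('a \<Rightarrow> nat) set" where
  "labelings L R N = {f \<in> extensional L. bij_betw f L {1..N} \<and> (\<forall>(a, b) \<in> R. f a < f b)}"

definition linear_extensions :: "'a set \<Rightarrow> ('a \<times> 'a) set \<Rightarrow> 'a list set" where
  "linear_extensions L R = {w. distinct w \<and> set w = L \<and> (\<forall>(a, b) \<in> R. precedes w a b)}"

definition rank :: "'a list \<Rightarrow> 'a \<Rightarrow> nat" where
  "rank w = (\<lambda>a \<in> set w. Suc (inv_into {..<length w} ((!) w) a))"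

lemma rank_nth:
  assumes "distinct w" "p < length w"
  shows "rank w (w ! p) = Suc p"
  using assms by (simp add: rank_def inv_into_f_f inj_on_nth)

lemma bij_betw_rank:
  assumes "distinct w"
  shows "bij_betw (rank w) (set w) {1..length w}"
proof -
  have "bij_betw (\<lambda>p. w ! p) {..<length w} (set w)"
    using assms by (rule bij_betw_nth) auto
  then have "bij_betw (inv_into {..<length w} ((!) w)) (set w) {..<length w}"
    by (rule bij_betw_inv_into)
  moreover have "bij_betw Suc {..<length w} {1..length w}"
    by (rule bij_betw_byWitness[where f' = "\<lambda>p. p - 1"]) auto
  ultimately have "bij_betw (Suc \<circ> inv_into {..<length w} ((!) w)) (set w) {1..length w}"
    by (rule bij_betw_trans)
  then show ?thesis
    by (simp add: rank_def comp_def)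
qed

lemma precedes_nth_iff:
  assumes "distinct w" "p < length w" "q < length w"
  shows "precedes w (w ! p) (w ! q) \<longleftrightarrow> p < q"
  using assms unfolding precedes_def by (auto simp: nth_eq_iff_index_eq)

lemma precedes_iff_rank_less:
  assumes "distinct w" "a \<in> set w" "b \<in> set w"
  shows "precedes w a b \<longleftrightarrow> rank w a < rank w b"
proof -
  obtain p q where "p < length w" "w ! p = a" "q < length w" "w ! q = b"
    using assms by (auto simp: in_set_conv_nth)
  with assms(1) show ?thesis
    by (auto simp: rank_nth precedes_nth_iff)
qed

lemma precedes_trans:
  assumes "distinct w" "precedes w a b" "precedes w b c"
  shows "precedes w a c"
proof -
  have "a \<in> set w" "b \<in> set w" "c \<in> set w"
    using assms(2,3) by (auto simp: precedes_def)
  then show ?thesis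
    using assms by (simp add: precedes_iff_rank_less)
qed

lemma inj_on_rank: "inj_on rank {w. distinct w \<and> set w = L}"
proof (rule inj_onI)
  fix v w assume "v \<in> {w. distinct w \<and> set w = L}" "w \<in> {w. distinct w \<and> set w = L}"
    and eq: "rank v = rank w"
  then have "distinct v" "distinct w" "set v = set w"
    by auto
  then have len: "length v = length w"
    using distinct_card by metis
  show "v = w"
  proof (rule nth_equalityI)
    fix p assume "p < length v"
    have "rank w (v ! p) = Suc p"
      using rank_nth[OF \<open>distinct v\<close> \<open>p < length v\<close>] eq by simp
    also have "\<dots> = rank w (w ! p)"
      using rank_nth[OF \<open>distinct w\<close>, of p] \<open>p < length v\<close> len by simp
    finally have "rank w (v ! p) = rank w (w ! p)" .
    moreover have "v ! p \<in> set w" "w ! p \<in> set w"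
      using nth_mem[of p v] nth_mem[of p w] \<open>p < length v\<close> len \<open>set v = set w\<close> by simp_all
    ultimately show "v ! p = w ! p"
      using bij_betw_imp_inj_on[OF bij_betw_rank[OF \<open>distinct w\<close>]] by (meson inj_onD)
  qed (rule len)
qed

lemma labelings_eq_rank_image:
  assumes "finite L" "R \<subseteq> L \<times> L"
  shows "labelings L R (card L) = rank ` linear_extensions L R"
proof
  show "rank ` linear_extensions L R \<subseteq> labelings L R (card L)"
  proof clarify
    fix w assume w: "w \<in> linear_extensions L R"
    then have "distinct w" "set w = L" "length w = card L"
      by (auto simp: linear_extensions_def distinct_card)
    with w assms(2) show "rank w \<in> labelings L R (card L)"
      using bij_betw_rank[of w]
      by (fastforce simp: labelings_def linear_extensions_def rank_def precedes_iff_rank_less)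
  qed
next
  show "labelings L R (card L) \<subseteq> rank ` linear_extensions L R"
  proof
    fix g assume g: "g \<in> labelings L R (card L)"
    then have bij: "bij_betw g L {1..card L}"
      by (simp add: labelings_def)
    define w where "w = map (inv_into L g) [1..<Suc (card L)]"
    have inv: "bij_betw (inv_into L g) {1..card L} L"
      using bij by (rule bij_betw_inv_into)
    then have "distinct w" "set w = L"
      by (auto simp del: upt_Suc
          simp: w_def distinct_map bij_betw_def atLeastLessThanSuc_atLeastAtMost)
    have "rank w a = g a" for a
    proof (cases "a \<in> L")
      case True
      then have "g a \<in> {1..card L}" "inv_into L g (g a) = a"
        using bij by (auto simp: bij_betw_def inv_into_f_f)
      then have "w ! (g a - 1) = a" "g a - 1 < length w"
        by (auto simp del: upt_Suc simp: w_def)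
      then show ?thesis
        using rank_nth[OF \<open>distinct w\<close>, of "g a - 1"] \<open>g a \<in> {1..card L}\<close> by simp
    next
      case False
      then show ?thesis
        using g \<open>set w = L\<close> by (simp add: rank_def labelings_def extensional_def)
    qed
    then have "rank w = g" ..
    moreover have "w \<in> linear_extensions L R"
      using g assms(2) \<open>distinct w\<close> \<open>set w = L\<close> \<open>rank w = g\<close>
      by (fastforce simp: linear_extensions_def labelings_def precedes_iff_rank_less)
    ultimately show "g \<in> rank ` linear_extensions L R" by blast
  qed
qed

lemma card_labelings_eq_card_linear_extensions:
  assumes "finite L" "R \<subseteq> L \<times> L"
  shows "card (labelings L R (card L)) = card (linear_extensions L R)"
proof -
  have "inj_on rank (linear_extensions L R)"
    by (rule inj_on_subset[OF inj_on_rank[of L]]) (auto simp: linear_extensions_def)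
  then show ?thesis
    using assms by (simp add: labelings_eq_rank_image card_image)
qed

lemma precedes_map_iff:
  assumes "inj_on f (set w)" "a \<in> set w" "b \<in> set w"
  shows "precedes (map f w) (f a) (f b) \<longleftrightarrow> precedes w a b"
  using assms unfolding precedes_def by (fastforce simp: inj_on_eq_iff)

lemma card_linear_extensions_iso:
  assumes f: "bij_betw f P L" and R: "R \<subseteq> P \<times> P" and R': "R' \<subseteq> L \<times> L"
    and iso: "\<And>a b. a \<in> P \<Longrightarrow> b \<in> P \<Longrightarrow> (f a, f b) \<in> R' \<longleftrightarrow> (a, b) \<in> R"
  shows "card (linear_extensions L R') = card (linear_extensions P R)"
proof -
  have "linear_extensions L R' = map f ` linear_extensions P R"
  proof
    show "map f ` linear_extensions P R \<subseteq> linear_extensions L R'"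
    proof clarify
      fix w assume w: "w \<in> linear_extensions P R"
      have "precedes (map f w) x y" if xy: "(x, y) \<in> R'" for x y
      proof -
        obtain a b where "a \<in> P" "b \<in> P" "x = f a" "y = f b"
          using xy R' f by (auto simp: bij_betw_def)
        then show ?thesis
          using w iso xy f by (auto simp: linear_extensions_def precedes_map_iff bij_betw_def)
      qed
      then show "map f w \<in> linear_extensions L R'"
        using w f by (auto simp: linear_extensions_def bij_betw_def distinct_map)
    qed
  next
    show "linear_extensions L R' \<subseteq> map f ` linear_extensions P R"
    proof
      fix v assume v: "v \<in> linear_extensions L R'"
      define u where "u = map (inv_into P f) v"
      have "distinct u" "set u = P"
        using v bij_betw_inv_into[OF f]
        by (auto simp: u_def linear_extensions_def bij_betw_def distinct_map)
      have "map f u = v"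
        using v f by (auto simp: u_def linear_extensions_def bij_betw_def f_inv_into_f
            intro: map_idI)
      have "precedes u a b" if "(a, b) \<in> R" for a b
      proof -
        have "(f a, f b) \<in> R'"
          using that R iso by blast
        then have "precedes (map f u) (f a) (f b)"
          using v \<open>map f u = v\<close> by (auto simp: linear_extensions_def)
        then show ?thesis
          using f R that \<open>set u = P\<close> by (auto simp: precedes_map_iff bij_betw_def)
      qed
      then have "u \<in> linear_extensions P R"
        using \<open>distinct u\<close> \<open>set u = P\<close> by (auto simp: linear_extensions_def)
      then show "v \<in> map f ` linear_extensions P R"
        using \<open>map f u = v\<close> by blast
    qed
  qed
  moreover have "inj_on (map f) (linear_extensions P R)"
    using f by (intro inj_on_mapI) (auto simp: linear_extensions_def bij_betw_def)
  ultimately show ?thesis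
    by (simp add: card_image)
qed

definition block_offset :: "nat list \<Rightarrow> nat \<Rightarrow> nat" where
  "block_offset xs k = sum_list (take k xs)"

lemma block_offset_Suc:
  "k < length xs \<Longrightarrow> block_offset xs (Suc k) = block_offset xs k + xs ! k"
  by (simp add: block_offset_def take_Suc_conv_app_nth)

lemma block_offset_mono:
  assumes "k \<le> k'"
  shows "block_offset xs k \<le> block_offset xs k'"
proof -
  have "take k' xs = take k xs @ take (k' - k) (drop k xs)"
    using assms by (metis le_add_diff_inverse take_add)
  then show ?thesis
    by (simp add: block_offset_def)
qed

lemma block_offset_le_sum_list:
  assumes "k < length xs"
  shows "block_offset xs k + xs ! k \<le> sum_list xs"
  using block_offset_mono[of "Suc k" "length xs" xs] assms
  by (simp add: block_offset_def take_Suc_conv_app_nth)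

lemma block_offset_add_eq_iff:
  assumes "k < length xs" "k' < length xs" "1 \<le> i" "i \<le> xs ! k" "1 \<le> i'" "i' \<le> xs ! k'"
  shows "block_offset xs k + i = block_offset xs k' + i' \<longleftrightarrow> k = k' \<and> i = i'"
proof -
  have less: "block_offset xs a + c < block_offset xs b + d"
    if "a < b" "a < length xs" "c \<le> xs ! a" "1 \<le> d" for a b c d
  proof -
    have "block_offset xs a + c \<le> block_offset xs (Suc a)"
      using that by (simp add: block_offset_Suc)
    also have "\<dots> \<le> block_offset xs b"
      using that by (intro block_offset_mono) simp
    finally show ?thesis
      using that by simp
  qed
  show ?thesis
    using less[of k k' i i'] less[of k' k i' i] assms by (cases k k' rule: linorder_cases) auto
qed

lemma block_offset_decomp:
  assumes "1 \<le> g" "g \<le> sum_list xs"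
  shows "\<exists>k i. k < length xs \<and> 1 \<le> i \<and> i \<le> xs ! k \<and> g = block_offset xs k + i"
  using assms
proof (induction xs arbitrary: g)
  case Nil
  then show ?case by simp
next
  case (Cons x xs)
  show ?case
  proof (cases "g \<le> x")
    case True
    with Cons.prems show ?thesis
      by (intro exI[of _ 0] exI[of _ g]) (simp add: block_offset_def)
  next
    case False
    with Cons.prems obtain k i where "k < length xs" "1 \<le> i" "i \<le> xs ! k"
      "g - x = block_offset xs k + i"
      using Cons.IH[of "g - x"] by fastforce
    with False show ?thesis
      by (intro exI[of _ "Suc k"] exI[of _ i]) (simp add: block_offset_def)
  qed
qed

lemma alphabet_iff [simp]:
  "X i \<in> alphabet n r s m \<longleftrightarrow> 1 \<le> i \<and> i \<le> n"
  "A i j k \<in> alphabet n r s m \<longleftrightarrow> 1 \<le> i \<and> i < j \<and> j \<le> n \<and> 1 \<le> k \<and> k \<le> m"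
  "B i k \<in> alphabet n r s m \<longleftrightarrow> 1 \<le> i \<and> i \<le> n \<and> 1 \<le> k \<and> k \<le> r"
  "C i k \<in> alphabet n r s m \<longleftrightarrow> 1 \<le> i \<and> i \<le> n \<and> 1 \<le> k \<and> k \<le> s"
  by (auto simp: alphabet_def)

lemma book_cells_iff [simp]:
  "Diag j \<in> book_cells n rs ss \<longleftrightarrow> 1 \<le> j \<and> j \<le> n"
  "Cell k i j \<in> book_cells n rs ss \<longleftrightarrow>
     k < length rs \<and> 1 \<le> i \<and> i \<le> rs ! k + n \<and> 1 \<le> j \<and> j \<le> n + ss ! k \<and> i \<le> j + rs ! k
     \<and> \<not> (i \<le> rs ! k \<and> n < j) \<and> \<not> (1 \<le> j \<and> j \<le> n \<and> i = j + rs ! k)"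
  by (auto simp: book_cells_def staircase_def is_diag_def)

lemma card_less_pairs: "card {(i, j). 1 \<le> i \<and> i < j \<and> j \<le> n} = n choose 2"
proof (induction n)
  case 0
  have "{(i, j). 1 \<le> i \<and> i < j \<and> j \<le> (0::nat)} = {}"
    by auto
  then show ?case
    by (subst \<open>_ = {}\<close>) simp
next
  case (Suc n)
  have eq: "{(i, j). 1 \<le> i \<and> i < j \<and> j \<le> Suc n}
      = {(i, j). 1 \<le> i \<and> i < j \<and> j \<le> n} \<union> (\<lambda>i. (i, Suc n)) ` {1..n}"
    by auto
  have "finite {(i, j). 1 \<le> i \<and> i < j \<and> j \<le> n}"
    by (rule finite_subset[of _ "{1..n} \<times> {1..n}"]) auto
  then have "card {(i, j). 1 \<le> i \<and> i < j \<and> j \<le> Suc n}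
      = card {(i, j). 1 \<le> i \<and> i < j \<and> j \<le> n} + n"
    unfolding eq by (subst card_Un_disjoint) (auto simp: card_image inj_on_def)
  then show ?case
    using Suc.IH by (simp add: numeral_2_eq_2)
qed

lemma card_alphabet: "card (alphabet n r s m) = (r + s + 1) * n + m * (n choose 2)"
  and finite_alphabet: "finite (alphabet n r s m)"
proof -
  let ?P = "{(i, j). 1 \<le> i \<and> i < j \<and> j \<le> n}"
  have fin: "finite ?P"
    by (rule finite_subset[of _ "{1..n} \<times> {1..n}"]) auto
  have eq: "alphabet n r s m = X ` {1..n} \<union> (\<lambda>((i, j), k). A i j k) ` (?P \<times> {1..m})
      \<union> case_prod B ` ({1..n} \<times> {1..r}) \<union> case_prod C ` ({1..n} \<times> {1..s})"
    by (auto simp: alphabet_def image_iff)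
  have "card ((\<lambda>((i, j), k). A i j k) ` (?P \<times> {1..m})) = (n choose 2) * m"
    using card_less_pairs[of n]
    by (subst card_image) (auto simp: inj_on_def card_cartesian_product)
  with fin show "card (alphabet n r s m) = (r + s + 1) * n + m * (n choose 2)"
    unfolding eq by ((subst card_Un_disjoint; (auto)?)+)
      (auto simp: card_image inj_on_def card_cartesian_product algebra_simps)
  show "finite (alphabet n r s m)"
    unfolding eq using fin by blast
qed

text \<open>Cell (i, j) of page k (0-based) becomes a_(i - r_k) j^(k+1) below the diagonal, and
  b_j or c_(i - r_k) in the r_k rows above it or the s_k columns right of it; the pages share
  the upper indices of the b's and c's in consecutive blocks.\<close>
definition letter_of_cell :: "nat \<Rightarrow> nat list \<Rightarrow> nat list \<Rightarrow> cell \<Rightarrow> letter" where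
  "letter_of_cell n rs ss c = (case c of
       Diag j \<Rightarrow> X j
     | Cell k i j \<Rightarrow>
         if i \<le> rs ! k then B j (block_offset rs k + i)
         else if j \<le> n then A (i - rs ! k) j (Suc k)
         else C (i - rs ! k) (block_offset ss k + (j - n)))"

lemma letter_of_cell_in_alphabet:
  assumes "length ss = length rs" "c \<in> book_cells n rs ss"
  shows "letter_of_cell n rs ss c \<in> alphabet n (sum_list rs) (sum_list ss) (length rs)"
  using assms block_offset_le_sum_list[of _ rs] block_offset_le_sum_list[of _ ss]
  by (cases c) (fastforce simp: letter_of_cell_def)+

lemma alphabet_subset_letter_of_cell_image:
  assumes "length ss = length rs"
  shows "alphabet n (sum_list rs) (sum_list ss) (length rs) \<subseteq> letter_of_cell n rs ss ` book_cells n rs ss"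
proof
  fix l assume l: "l \<in> alphabet n (sum_list rs) (sum_list ss) (length rs)"
  show "l \<in> letter_of_cell n rs ss ` book_cells n rs ss"
  proof (cases l)
    case (X i)
    with l show ?thesis
      by (intro image_eqI[where x = "Diag i"]) (auto simp: letter_of_cell_def)
  next
    case (A i j k)
    with l show ?thesis
      by (intro image_eqI[where x = "Cell (k - 1) (i + rs ! (k - 1)) j"])
        (auto simp: letter_of_cell_def)
  next
    case (B j g)
    with l obtain k i where "k < length rs" "1 \<le> i" "i \<le> rs ! k" "g = block_offset rs k + i"
      using block_offset_decomp[of g rs] by auto
    with l B show ?thesis
      by (intro image_eqI[where x = "Cell k i j"]) (auto simp: letter_of_cell_def)
  next
    case (C i g)
    with l obtain k j where "k < length ss" "1 \<le> j" "j \<le> ss ! k" "g = block_offset ss k + j"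
      using block_offset_decomp[of g ss] by auto
    with l C assms show ?thesis
      by (intro image_eqI[where x = "Cell k (i + rs ! k) (n + j)"]) (auto simp: letter_of_cell_def)
  qed
qed

lemma inj_on_letter_of_cell:
  assumes "length ss = length rs"
  shows "inj_on (letter_of_cell n rs ss) (book_cells n rs ss)"
proof (rule inj_onI)
  fix c d assume c: "c \<in> book_cells n rs ss" and d: "d \<in> book_cells n rs ss"
    and eq: "letter_of_cell n rs ss c = letter_of_cell n rs ss d"
  show "c = d"
  proof (cases c; cases d)
    fix k i j k' i' j' assume "c = Cell k i j" "d = Cell k' i' j'"
    with c d eq assms show "c = d"
      using block_offset_add_eq_iff[of k rs k' i i'] block_offset_add_eq_iff[of k ss k' "j - n" "j' - n"]
      by (auto simp: letter_of_cell_def split: if_splits)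
  qed (use eq in \<open>auto simp: letter_of_cell_def split: if_splits\<close>)
qed

lemma bij_betw_letter_of_cell:
  assumes "length ss = length rs"
  shows "bij_betw (letter_of_cell n rs ss) (book_cells n rs ss)
           (alphabet n (sum_list rs) (sum_list ss) (length rs))"
  using inj_on_letter_of_cell[OF assms] letter_of_cell_in_alphabet[OF assms]
    alphabet_subset_letter_of_cell_image[OF assms]
  unfolding bij_betw_def by blast

section \<open>The two orders\<close>

definition book_order :: "nat \<Rightarrow> nat list \<Rightarrow> nat list \<Rightarrow> (cell \<times> cell) set" where
  "book_order n rs ss =
     {(Diag (i - rs ! k), Cell k i j) | k i j. Cell k i j \<in> book_cells n rs ss \<and> rs ! k < i}
   \<union> {(Cell k i j, Diag j) | k i j. Cell k i j \<in> book_cells n rs ss \<and> j \<le> n}"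

definition selberg_order :: "nat \<Rightarrow> nat \<Rightarrow> nat \<Rightarrow> nat \<Rightarrow> (letter \<times> letter) set" where
  "selberg_order n r s m =
     {(X i, A i j k) | i j k. A i j k \<in> alphabet n r s m}
   \<union> {(A i j k, X j) | i j k. A i j k \<in> alphabet n r s m}
   \<union> {(B i k, X i) | i k. B i k \<in> alphabet n r s m}
   \<union> {(X i, C i k) | i k. C i k \<in> alphabet n r s m}"

lemma book_order_subset: "book_order n rs ss \<subseteq> book_cells n rs ss \<times> book_cells n rs ss"
  by (auto simp: book_order_def)

lemma selberg_order_subset: "selberg_order n r s m \<subseteq> alphabet n r s m \<times> alphabet n r s m"
  by (auto simp: selberg_order_def)

lemma selberg_order_iff:
  "(X i, y) \<in> selberg_order n r s m \<longleftrightarrow>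
     (\<exists>j k. y = A i j k \<and> A i j k \<in> alphabet n r s m) \<or> (\<exists>k. y = C i k \<and> C i k \<in> alphabet n r s m)"
  "(A i j k, y) \<in> selberg_order n r s m \<longleftrightarrow> y = X j \<and> A i j k \<in> alphabet n r s m"
  "(B i k, y) \<in> selberg_order n r s m \<longleftrightarrow> y = X i \<and> B i k \<in> alphabet n r s m"
  "(C i k, y) \<notin> selberg_order n r s m"
  unfolding selberg_order_def by blast+

lemma letter_of_cell_order_iff:
  assumes "length ss = length rs" "c \<in> book_cells n rs ss" "d \<in> book_cells n rs ss"
  shows "(letter_of_cell n rs ss c, letter_of_cell n rs ss d)
           \<in> selberg_order n (sum_list rs) (sum_list ss) (length rs)
         \<longleftrightarrow> (c, d) \<in> book_order n rs ss"
proof -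
  have "letter_of_cell n rs ss c \<in> alphabet n (sum_list rs) (sum_list ss) (length rs)"
    "letter_of_cell n rs ss d \<in> alphabet n (sum_list rs) (sum_list ss) (length rs)"
    using assms by (auto intro: letter_of_cell_in_alphabet)
  then show ?thesis
    using assms(2,3)
    by (cases c; cases d) (auto simp: selberg_order_iff letter_of_cell_def book_order_def)
qed

lemma SB_minus_eq_labelings:
  "SB_minus n rs ss = labelings (book_cells n rs ss) (book_order n rs ss)
     ((sum_list rs + sum_list ss + 1) * n + length rs * (n choose 2))"
proof -
  have cell: "Cell k i j \<in> book_cells n rs ss \<longleftrightarrow>
      k < length rs \<and> (i, j) \<in> staircase n (rs ! k) (ss ! k) \<and> \<not> is_diag n (rs ! k) i j"
    for k i j
    by (simp add: book_cells_def)
  show ?thesis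
    unfolding SB_minus_def labelings_def book_order_def cell by blast
qed

lemma SP_eq_linear_extensions:
  assumes "0 < m"
  shows "SP n r s m = linear_extensions (alphabet n r s m) (selberg_order n r s m)"
proof (intro set_eqI iffI)
  fix w assume "w \<in> SP n r s m"
  then show "w \<in> linear_extensions (alphabet n r s m) (selberg_order n r s m)"
    unfolding SP_def linear_extensions_def selberg_order_def by auto
next
  fix w assume w: "w \<in> linear_extensions (alphabet n r s m) (selberg_order n r s m)"
  then have ord: "precedes w a b" if "(a, b) \<in> selberg_order n r s m" for a b
    using that by (auto simp: linear_extensions_def)
  have "precedes w (X i) (X j)" if "1 \<le> i" "i < j" "j \<le> n" for i j
  proof -
    have "precedes w (X i) (A i j 1)" "precedes w (A i j 1) (X j)"
      using that assms by (auto intro!: ord simp: selberg_order_def)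
    then show ?thesis
      using w precedes_trans by (auto simp: linear_extensions_def)
  qed
  with w show "w \<in> SP n r s m"
    unfolding SP_def by (auto intro!: ord simp: linear_extensions_def selberg_order_def)
qed

theorem proposition4p2:
  fixes n m :: nat and rs ss :: "nat list"
  assumes "0 < n" and "0 < m" and "length rs = m" and "length ss = m"
  shows "card (SB_minus n rs ss) = card (SP n (sum_list rs) (sum_list ss) m)"
proof -
  have len: "length ss = length rs"
    using assms by simp
  note bij = bij_betw_letter_of_cell[OF len, of n]
  have fin: "finite (book_cells n rs ss)"
    using bij_betw_finite[OF bij] finite_alphabet by blast
  have "card (book_cells n rs ss) = (sum_list rs + sum_list ss + 1) * n + length rs * (n choose 2)"
    using bij_betw_same_card[OF bij] card_alphabet by simp
  then have "card (SB_minus n rs ss)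
      = card (labelings (book_cells n rs ss) (book_order n rs ss) (card (book_cells n rs ss)))"
    by (simp add: SB_minus_eq_labelings)
  also have "\<dots> = card (linear_extensions (book_cells n rs ss) (book_order n rs ss))"
    using fin book_order_subset by (rule card_labelings_eq_card_linear_extensions)
  also have "\<dots> = card (linear_extensions (alphabet n (sum_list rs) (sum_list ss) (length rs))
                       (selberg_order n (sum_list rs) (sum_list ss) (length rs)))"
    using bij book_order_subset selberg_order_subset letter_of_cell_order_iff[OF len]
    by (rule card_linear_extensions_iso[symmetric])
  also have "\<dots> = card (SP n (sum_list rs) (sum_list ss) m)"
    using assms by (simp add: SP_eq_linear_extensions)
  finally show ?thesis .
qed

end
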